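(* Let $x$ be fixed observed data and let $p(x,z)$, $z\in\mathbb{R}^d$, be a positive, differentiable joint density (in $z$). Let $K\ge 1$, $n\in\{1,\dots,K\}$, and let $q$ be a probability density on $\mathbb{R}^d$ with finite second moment. Set $w(z):=p(x,z)/q(z)$. For a probability density $q_n$ on $\mathbb{R}^d$ with finite second moment define $$\mathcal{F}_n(q_n):=\mathbb{E}_{z_n\sim q_n}\Big[\mathbb{E}_{\{z_i\}_{i\neq n}\overset{i.i.d.}{\sim} q}\log\Big(\frac1K\frac{p(x,z_n)}{q_n(z_n)}+\frac1K\sum_{i\neq n}\frac{p(x,z_i)}{q(z_i)}\Big)\Big].$$ Suppose standard regularity conditions hold that allow interchanging derivatives (in $\epsilon$ and in $z$) with expectations/integrals. Then the Wasserstein gradient of $\mathcal{F}_n$ at $q_n=q$ is the map $\mathbb{R}^d\to\mathbb{R}^d$ given by $$\nabla^W[\mathcal{F}_n(q)](z_n)=\mathbb{E}_{\{z_i\}_{i\neq n}\overset{i.i.d.}{\sim} q}\left[\left(\frac{w(z_n)}{\sum_{i=1}^K w(z_i)}\right)^2\nabla_{z_n}\log w(z_n)\right].$$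
   Context: For a functional $\mathcal{F}$ on the space $\mathcal{P}_2(\mathbb{R}^d)$ of probability measures with finite second moment, the first variation at $\mu$ is a function $\frac{\delta\mathcal{F}(\mu)}{\delta\mu}:\mathbb{R}^d\to\mathbb{R}$ such that $\lim_{\epsilon\to0^+}\frac{\mathcal{F}(\mu+\epsilon\nu)-\mathcal{F}(\mu)}{\epsilon}=\int\frac{\delta\mathcal{F}(\mu)}{\delta\mu}(x)\,\nu(dx)$ for all signed measures $\nu$ with $\mu+\epsilon\nu\in\mathcal{P}_2(\mathbb{R}^d)$ for small $\epsilon>0$. The Wasserstein gradient is $[\nabla^W\mathcal{F}(\mu)](x):=\nabla_x\frac{\delta\mathcal{F}(\mu)}{\delta\mu}(x)$. In the displayed formula, $z_n$ is the point of evaluation and $z_i$, $i\ne n$, are integrated out. *)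

theory Defs
  imports "HOL-Probability.Probability"
begin

definition grad :: "('a::euclidean_space \<Rightarrow> real) \<Rightarrow> 'a \<Rightarrow> 'a" where
  "grad f z = (\<Sum>b\<in>Basis. frechet_derivative f (at z) b *\<^sub>R b)"

definition prob_density_P2 :: "('a::euclidean_space \<Rightarrow> real) \<Rightarrow> bool" where
  "prob_density_P2 q \<longleftrightarrow> q \<in> borel_measurable lborel \<and> (\<forall>z. 0 \<le> q z)
     \<and> integrable lborel q \<and> integral\<^sup>L lborel q = 1
     \<and> integrable lborel (\<lambda>z. norm z ^ 2 * q z)"

definition others :: "nat \<Rightarrow> nat \<Rightarrow> ('a::euclidean_space \<Rightarrow> real) \<Rightarrow> (nat \<Rightarrow> 'a) measure" where
  "others K n q = (\<Pi>\<^sub>M i\<in>{1..K} - {n}. density lborel (\<lambda>z. ennreal (q z)))"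

definition Ssum :: "nat \<Rightarrow> nat \<Rightarrow> ('a \<Rightarrow> real) \<Rightarrow> ('a \<Rightarrow> real) \<Rightarrow> (nat \<Rightarrow> 'a) \<Rightarrow> real" where
  "Ssum K n p q y = (\<Sum>i\<in>{1..K} - {n}. p (y i) / q (y i))"

text \<open>The functional F_n (p stands for z |-> p(x,z) with the data x fixed).\<close>
definition Fn :: "nat \<Rightarrow> nat \<Rightarrow> ('a::euclidean_space \<Rightarrow> real) \<Rightarrow> ('a \<Rightarrow> real)
                   \<Rightarrow> ('a \<Rightarrow> real) \<Rightarrow> real" where
  "Fn K n p q qn = (LINT zn|density lborel (\<lambda>z. ennreal (qn z)).
       LINT y|others K n q. ln ((1 / real K) * (p zn / qn zn) + (1 / real K) * Ssum K n p q y))"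

text \<open>Admissible perturbations: (densities of) finite signed measures nu such that
  q + eps nu is again a probability density with finite second moment for small eps > 0.\<close>
definition admissible :: "('a::euclidean_space \<Rightarrow> real) \<Rightarrow> ('a \<Rightarrow> real) \<Rightarrow> bool" where
  "admissible q h \<longleftrightarrow> integrable lborel h \<and>
     eventually (\<lambda>\<epsilon>. prob_density_P2 (\<lambda>z. q z + \<epsilon> * h z)) (at_right 0)"

definition first_variation :: "(('a::euclidean_space \<Rightarrow> real) \<Rightarrow> real) \<Rightarrow> ('a \<Rightarrow> real)
                                \<Rightarrow> ('a \<Rightarrow> real) \<Rightarrow> bool" where
  "first_variation F q g \<longleftrightarrow> (\<forall>h. admissible q h \<longrightarrow>
     ((\<lambda>\<epsilon>. (F (\<lambda>z. q z + \<epsilon> * h z) - F q) / \<epsilon>) \<longlongrightarrow> (LINT z|lborel. g z * h z)) (at_right 0))"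

end

theory Submission
  imports Defs
begin

text \<open>Perturb q_n = q to q + \<epsilon> h. With S the sum of the weights of the other K - 1 samples,
  the integrand (q + \<epsilon> h)(z) ln((p(z)/(q + \<epsilon> h)(z) + S)/K) has \<epsilon>-derivative
  h(z) (ln((w(z) + S)/K) - w(z)/(w(z) + S)) at \<epsilon> = 0, so by the interchange hypothesis the
  expectation of the bracket over the other samples is a first variation. Its gradient is taken
  inside the expectation, where \<nabla> ln((w + S)/K) - \<nabla> (w/(w + S)) = (w/(w + S))^2 \<nabla> ln w,
  and w(z) + S is the sum of all K weights.\<close>

definition log_weight_mean :: "nat \<Rightarrow> nat \<Rightarrow> ('a \<Rightarrow> real) \<Rightarrow> ('a \<Rightarrow> real) \<Rightarrow> 'a \<Rightarrow> (nat \<Rightarrow> 'a) \<Rightarrow> real"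
  where "log_weight_mean K n p q z y = ln ((1 / real K) * (p z / q z) + (1 / real K) * Ssum K n p q y)"

definition normalized_weight :: "nat \<Rightarrow> nat \<Rightarrow> ('a \<Rightarrow> real) \<Rightarrow> ('a \<Rightarrow> real) \<Rightarrow> 'a \<Rightarrow> (nat \<Rightarrow> 'a) \<Rightarrow> real"
  where "normalized_weight K n p q z y = (p z / q z) / (p z / q z + Ssum K n p q y)"

lemma grad_eq_if_has_derivative:
  "(f has_derivative f') (at z) \<Longrightarrow> grad f z = (\<Sum>b\<in>Basis. f' b *\<^sub>R b)"
  unfolding grad_def using frechet_derivative_at by metis

lemma grad_diff:
  assumes "f differentiable (at z)" and "g differentiable (at z)"
  shows "grad (\<lambda>u. f u - g u) z = grad f z - grad g z"
proof -
  have "((\<lambda>u. f u - g u) has_derivative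
          (\<lambda>v. frechet_derivative f (at z) v - frechet_derivative g (at z) v)) (at z)"
    using assms by (intro has_derivative_diff) (simp_all add: frechet_derivative_works)
  from grad_eq_if_has_derivative[OF this] show ?thesis
    unfolding grad_def by (simp add: scaleR_diff_left sum_subtractf)
qed

lemma grad_ln_mean_minus_grad_ratio:
  fixes w :: "'a::euclidean_space \<Rightarrow> real"
  assumes "w differentiable (at z)" and w_pos: "w z > 0" and "s \<ge> 0" and "K > 0"
  shows "grad (\<lambda>u. ln ((1 / real K) * w u + (1 / real K) * s)) z - grad (\<lambda>u. w u / (w u + s)) z
       = (w z / (w z + s))\<^sup>2 *\<^sub>R grad (\<lambda>u. ln (w u)) z"
proof -
  define Dw where "Dw = frechet_derivative w (at z)"
  have Dw: "(w has_derivative Dw) (at z)"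
    using assms(1) unfolding Dw_def frechet_derivative_works .
  have mean_pos: "(1 / real K) * w z + (1 / real K) * s > 0"
    using assms by (simp add: add_pos_nonneg)
  have "grad (\<lambda>u. ln ((1 / real K) * w u + (1 / real K) * s)) z
      = (\<Sum>b\<in>Basis. (Dw b / (w z + s)) *\<^sub>R b)"
    by (rule grad_eq_if_has_derivative, rule has_derivative_eq_rhs,
        (rule derivative_eq_intros Dw mean_pos refl)+)
       (use assms in \<open>auto simp: field_simps\<close>)
  moreover have "grad (\<lambda>u. w u / (w u + s)) z = (\<Sum>b\<in>Basis. (Dw b * s / (w z + s)\<^sup>2) *\<^sub>R b)"
    by (rule grad_eq_if_has_derivative, rule has_derivative_eq_rhs,
        (rule derivative_eq_intros Dw refl)+)
       (use assms in \<open>auto simp: field_simps power2_eq_square\<close>)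
  moreover have "grad (\<lambda>u. ln (w u)) z = (\<Sum>b\<in>Basis. (Dw b / w z) *\<^sub>R b)"
    by (rule grad_eq_if_has_derivative, rule has_derivative_eq_rhs,
        (rule derivative_eq_intros Dw w_pos refl)+)
       (use assms in \<open>auto simp: field_simps\<close>)
  moreover have "Dw b / (w z + s) - Dw b * s / (w z + s)\<^sup>2 = (w z / (w z + s))\<^sup>2 * (Dw b / w z)" for b
  proof -
    have "Dw b / (w z + s) - Dw b * s / (w z + s)\<^sup>2 = Dw b * w z / (w z + s)\<^sup>2"
      using assms by (simp add: power2_eq_square divide_simps) (simp add: algebra_simps)
    also have "\<dots> = (w z / (w z + s))\<^sup>2 * (Dw b / w z)"
      using assms by (simp add: power2_eq_square divide_simps)
    finally show ?thesis .
  qed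
  ultimately show ?thesis
    by (simp add: scaleR_sum_right sum_subtractf[symmetric] scaleR_diff_left[symmetric])
qed

lemma has_real_derivative_perturbed_log_mean:
  fixes P Q H s :: real
  assumes "P > 0" and "Q > 0" and "s \<ge> 0" and "K > 0"
  shows "((\<lambda>\<epsilon>. (Q + \<epsilon> * H) * ln ((1 / real K) * (P / (Q + \<epsilon> * H)) + (1 / real K) * s))
           has_real_derivative
           H * ln ((1 / real K) * (P / Q) + (1 / real K) * s) - H * ((P / Q) / (P / Q + s))) (at_right 0)"
proof -
  have mean_pos: "(1 / real K) * (P / (Q + 0 * H)) + (1 / real K) * s > 0"
    using assms by (simp add: add_pos_nonneg)
  have "Q + 0 * H \<noteq> 0" using assms by simp
  have "((\<lambda>\<epsilon>. (Q + \<epsilon> * H) * ln ((1 / real K) * (P / (Q + \<epsilon> * H)) + (1 / real K) * s))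
           has_real_derivative
           H * ln ((1 / real K) * (P / Q) + (1 / real K) * s) - H * ((P / Q) / (P / Q + s))) (at 0)"
    by (rule DERIV_cong, (rule derivative_eq_intros refl mean_pos \<open>Q + 0 * H \<noteq> 0\<close>)+)
       (use assms in \<open>simp add: divide_simps add_pos_nonneg\<close>)
  then show ?thesis by (rule has_field_derivative_at_within)
qed

lemma prob_space_density_P2:
  assumes "prob_density_P2 q"
  shows "prob_space (density lborel (\<lambda>z. ennreal (q z)))"
proof
  have "emeasure (density lborel (\<lambda>z. ennreal (q z))) UNIV = (\<integral>\<^sup>+ z. ennreal (q z) \<partial>lborel)"
    using assms unfolding prob_density_P2_def by (simp add: emeasure_density)
  also have "\<dots> = ennreal (integral\<^sup>L lborel q)"
    using assms unfolding prob_density_P2_def by (intro nn_integral_eq_integral) auto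
  finally show "emeasure (density lborel (\<lambda>z. ennreal (q z))) (space (density lborel (\<lambda>z. ennreal (q z)))) = 1"
    using assms unfolding prob_density_P2_def by simp
qed

lemma prob_space_others: "prob_density_P2 q \<Longrightarrow> prob_space (others K n q)"
  unfolding others_def by (intro prob_space_PiM prob_space_density_P2)

lemma Ssum_measurable:
  fixes p q :: "'a::euclidean_space \<Rightarrow> real"
  assumes [measurable]: "p \<in> borel_measurable borel" "q \<in> borel_measurable borel"
  shows "Ssum K n p q \<in> borel_measurable (others K n q)"
  unfolding Ssum_def[abs_def] others_def by measurable

lemma Ssum_nonneg: "(\<And>z. p z > 0) \<Longrightarrow> (\<And>z. q z > 0) \<Longrightarrow> Ssum K n p q y \<ge> 0"
  unfolding Ssum_def by (intro sum_nonneg) (simp add: less_imp_le)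

lemma sum_weights_fun_upd:
  "n \<in> {1..K} \<Longrightarrow> (\<Sum>i\<in>{1..K}. p ((y(n := z)) i) / q ((y(n := z)) i)) = p z / q z + Ssum K n p q y"
  unfolding Ssum_def by (simp add: sum.remove)

lemma integrable_normalized_weight:
  fixes p q :: "'a::euclidean_space \<Rightarrow> real"
  assumes "prob_density_P2 q" and p_pos: "\<And>z. p z > 0" and q_pos: "\<And>z. q z > 0"
    and [measurable]: "p \<in> borel_measurable borel"
  shows "integrable (others K n q) (normalized_weight K n p q z)"
proof -
  interpret prob_space "others K n q" using prob_space_others[OF assms(1)] .
  have [measurable]: "q \<in> borel_measurable borel"
    using assms(1) unfolding prob_density_P2_def by simp
  have ratio_le_1: "\<bar>w / (w + s)\<bar> \<le> 1" if "w > 0" "s \<ge> 0" for w s :: real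
    using that by (simp add: divide_le_eq_1)
  have "\<bar>normalized_weight K n p q z y\<bar> \<le> 1" for y
    unfolding normalized_weight_def
    by (rule ratio_le_1) (use p_pos q_pos in \<open>simp_all add: Ssum_nonneg\<close>)
  moreover have [measurable]: "Ssum K n p q \<in> borel_measurable (others K n q)"
    by (rule Ssum_measurable) measurable
  then have "normalized_weight K n p q z \<in> borel_measurable (others K n q)"
    unfolding normalized_weight_def[abs_def] by measurable
  ultimately show ?thesis
    by (intro integrable_const_bound[where B = 1] AE_I2) simp_all
qed

lemma differentiable_imp_borel_measurable:
  fixes f :: "'a::euclidean_space \<Rightarrow> 'b::real_normed_vector"
  shows "(\<And>z. f differentiable (at z)) \<Longrightarrow> f \<in> borel_measurable borel"
  by (intro borel_measurable_continuous_onI differentiable_imp_continuous_on)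
     (simp add: differentiable_on_def differentiable_at_withinI)

lemma first_variation_Fn_at_q:
  fixes p q :: "'a::euclidean_space \<Rightarrow> real"
  assumes p_pos: "\<And>z. p z > 0" and p_meas: "p \<in> borel_measurable borel"
    and K: "K > 0" and q: "prob_density_P2 q" and q_pos: "\<And>z. q z > 0"
    and reg_eps: "\<And>h D. admissible q h \<Longrightarrow>
        (\<And>z y. ((\<lambda>\<epsilon>. (q z + \<epsilon> * h z) * ln ((1 / real K) * (p z / (q z + \<epsilon> * h z))
                     + (1 / real K) * Ssum K n p q y)) has_real_derivative D z y) (at_right 0)) \<Longrightarrow>
        ((\<lambda>\<epsilon>. (Fn K n p q (\<lambda>z. q z + \<epsilon> * h z) - Fn K n p q q) / \<epsilon>)
           \<longlongrightarrow> (LINT z|lborel. LINT y|others K n q. D z y)) (at_right 0)"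
    and reg_int: "\<And>z. integrable (others K n q) (log_weight_mean K n p q z)"
  shows "first_variation (Fn K n p q) q
           (\<lambda>z. (LINT y|others K n q. log_weight_mean K n p q z y)
              - (LINT y|others K n q. normalized_weight K n p q z y))"
    (is "first_variation _ _ ?g")
  unfolding first_variation_def
proof (intro allI impI)
  fix h assume h: "admissible q h"
  let ?D = "\<lambda>z y. h z * log_weight_mean K n p q z y - h z * normalized_weight K n p q z y"
  have "((\<lambda>\<epsilon>. (Fn K n p q (\<lambda>z. q z + \<epsilon> * h z) - Fn K n p q q) / \<epsilon>)
           \<longlongrightarrow> (LINT z|lborel. LINT y|others K n q. ?D z y)) (at_right 0)"
    unfolding log_weight_mean_def normalized_weight_def
    by (rule reg_eps[OF h], rule has_real_derivative_perturbed_log_mean)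
       (simp_all add: p_pos q_pos K Ssum_nonneg)
  moreover have "(LINT y|others K n q. ?D z y) = ?g z * h z" for z
    using reg_int integrable_normalized_weight[OF q p_pos q_pos p_meas]
    by (simp add: algebra_simps)
  ultimately show "((\<lambda>\<epsilon>. (Fn K n p q (\<lambda>z. q z + \<epsilon> * h z) - Fn K n p q q) / \<epsilon>)
           \<longlongrightarrow> (LINT z|lborel. ?g z * h z)) (at_right 0)"
    by simp
qed

lemma grad_log_weight_mean_minus_grad_normalized_weight:
  fixes p q :: "'a::euclidean_space \<Rightarrow> real"
  assumes p_pos: "\<And>z. p z > 0" and q_pos: "\<And>z. q z > 0"
    and "p differentiable (at z)" and "q differentiable (at z)" and "K > 0" and n: "n \<in> {1..K}"
  shows "grad (\<lambda>u. log_weight_mean K n p q u y) z - grad (\<lambda>u. normalized_weight K n p q u y) z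
       = ((p z / q z) / (\<Sum>i\<in>{1..K}. p ((y(n := z)) i) / q ((y(n := z)) i)))\<^sup>2
           *\<^sub>R grad (\<lambda>u. ln (p u / q u)) z"
  unfolding log_weight_mean_def normalized_weight_def sum_weights_fun_upd[OF n]
proof (rule grad_ln_mean_minus_grad_ratio)
  show "(\<lambda>u. p u / q u) differentiable (at z)"
    using assms less_imp_neq[OF q_pos[of z]] by (intro differentiable_divide) auto
qed (simp_all add: assms Ssum_nonneg)

lemma grad_first_variation_at_q:
  fixes p q :: "'a::euclidean_space \<Rightarrow> real" and K n :: nat
  defines "M \<equiv> others K n q"
  assumes p_pos: "\<And>z. p z > 0" and q_pos: "\<And>z. q z > 0"
    and p_diff: "p differentiable (at z)" and q_diff: "q differentiable (at z)"
    and K: "K > 0" and n: "n \<in> {1..K}"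
    and int_L: "integrable M (\<lambda>y. grad (\<lambda>u. log_weight_mean K n p q u y) z)"
    and diff_L: "(\<lambda>u. LINT y|M. log_weight_mean K n p q u y) differentiable (at z)"
    and grad_L: "grad (\<lambda>u. LINT y|M. log_weight_mean K n p q u y) z
                   = (LINT y|M. grad (\<lambda>u. log_weight_mean K n p q u y) z)"
    and int_R: "integrable M (\<lambda>y. grad (\<lambda>u. normalized_weight K n p q u y) z)"
    and diff_R: "(\<lambda>u. LINT y|M. normalized_weight K n p q u y) differentiable (at z)"
    and grad_R: "grad (\<lambda>u. LINT y|M. normalized_weight K n p q u y) z
                   = (LINT y|M. grad (\<lambda>u. normalized_weight K n p q u y) z)"
  shows "grad (\<lambda>u. (LINT y|M. log_weight_mean K n p q u y) - (LINT y|M. normalized_weight K n p q u y)) z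
       = (LINT y|M. ((p z / q z) / (\<Sum>i\<in>{1..K}. p ((y(n := z)) i) / q ((y(n := z)) i)))\<^sup>2
                       *\<^sub>R grad (\<lambda>u. ln (p u / q u)) z)"
proof -
  have "grad (\<lambda>u. (LINT y|M. log_weight_mean K n p q u y) - (LINT y|M. normalized_weight K n p q u y)) z
      = (LINT y|M. grad (\<lambda>u. log_weight_mean K n p q u y) z)
        - (LINT y|M. grad (\<lambda>u. normalized_weight K n p q u y) z)"
    using grad_diff[OF diff_L diff_R] grad_L grad_R by simp
  also have "\<dots> = (LINT y|M. grad (\<lambda>u. log_weight_mean K n p q u y) z
                              - grad (\<lambda>u. normalized_weight K n p q u y) z)"
    using int_L int_R by simp
  also have "\<dots> = (LINT y|M. ((p z / q z) / (\<Sum>i\<in>{1..K}. p ((y(n := z)) i) / q ((y(n := z)) i)))\<^sup>2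
                              *\<^sub>R grad (\<lambda>u. ln (p u / q u)) z)"
    using grad_log_weight_mean_minus_grad_normalized_weight[OF p_pos q_pos p_diff q_diff K n] by simp
  finally show ?thesis .
qed

theorem proposition1:
  fixes p :: "'b \<Rightarrow> 'a::euclidean_space \<Rightarrow> real" and x :: 'b
    and q :: "'a \<Rightarrow> real" and K n :: nat
  assumes p_pos: "\<And>z. p x z > 0"
    and p_diff: "\<And>z. p x differentiable (at z)"
    and K: "K \<ge> 1" and n: "n \<in> {1..K}"
    and q: "prob_density_P2 q"
    and q_pos: "\<And>z. q z > 0"
    and q_diff: "\<And>z. q differentiable (at z)"
    \<comment> \<open>regularity: interchange of the derivative in epsilon with the integrals\<close>
    and reg_eps: "\<And>h D. admissible q h \<Longrightarrow>
        (\<And>z y. ((\<lambda>\<epsilon>. (q z + \<epsilon> * h z) * ln ((1 / real K) * (p x z / (q z + \<epsilon> * h z))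
                     + (1 / real K) * Ssum K n (p x) q y)) has_real_derivative D z y) (at_right 0)) \<Longrightarrow>
        ((\<lambda>\<epsilon>. (Fn K n (p x) q (\<lambda>z. q z + \<epsilon> * h z) - Fn K n (p x) q q) / \<epsilon>)
           \<longlongrightarrow> (LINT z|lborel. LINT y|others K n q. D z y)) (at_right 0)"
    \<comment> \<open>regularity: integrability and interchange of the gradient in z with the expectation\<close>
    and reg_int: "\<And>z. integrable (others K n q)
        (\<lambda>y. ln ((1 / real K) * (p x z / q z) + (1 / real K) * Ssum K n (p x) q y))"
    and reg_z1: "\<And>z. integrable (others K n q)
          (\<lambda>y. grad (\<lambda>u. ln ((1 / real K) * (p x u / q u) + (1 / real K) * Ssum K n (p x) q y)) z)
        \<and> (\<lambda>u. LINT y|others K n q. ln ((1 / real K) * (p x u / q u) + (1 / real K) * Ssum K n (p x) q y))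
            differentiable (at z)
        \<and> grad (\<lambda>u. LINT y|others K n q. ln ((1 / real K) * (p x u / q u) + (1 / real K) * Ssum K n (p x) q y)) z
          = (LINT y|others K n q.
               grad (\<lambda>u. ln ((1 / real K) * (p x u / q u) + (1 / real K) * Ssum K n (p x) q y)) z)"
    and reg_z2: "\<And>z. integrable (others K n q)
          (\<lambda>y. grad (\<lambda>u. (p x u / q u) / (p x u / q u + Ssum K n (p x) q y)) z)
        \<and> (\<lambda>u. LINT y|others K n q. (p x u / q u) / (p x u / q u + Ssum K n (p x) q y))
            differentiable (at z)
        \<and> grad (\<lambda>u. LINT y|others K n q. (p x u / q u) / (p x u / q u + Ssum K n (p x) q y)) z
          = (LINT y|others K n q. grad (\<lambda>u. (p x u / q u) / (p x u / q u + Ssum K n (p x) q y)) z)"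
  shows "\<exists>g. first_variation (Fn K n (p x) q) q g \<and> (\<forall>z. g differentiable (at z)) \<and>
           (\<forall>zn. grad g zn =
              (LINT y|others K n q.
                 ((p x zn / q zn) / (\<Sum>i\<in>{1..K}. p x ((y(n := zn)) i) / q ((y(n := zn)) i))) ^ 2
                   *\<^sub>R grad (\<lambda>u. ln (p x u / q u)) zn))"
proof -
  define g where "g z = (LINT y|others K n q. log_weight_mean K n (p x) q z y)
                        - (LINT y|others K n q. normalized_weight K n (p x) q z y)" for z
  have "first_variation (Fn K n (p x) q) q g"
    unfolding g_def
    by (rule first_variation_Fn_at_q[OF p_pos differentiable_imp_borel_measurable[OF p_diff] _ q q_pos reg_eps])
       (use K reg_int in \<open>simp_all add: log_weight_mean_def[abs_def]\<close>)
  moreover have "g differentiable (at z)" for z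
    using reg_z1[of z] reg_z2[of z] unfolding g_def[abs_def] log_weight_mean_def normalized_weight_def
    by (intro differentiable_diff) simp_all
  moreover have "grad g zn = (LINT y|others K n q.
                 ((p x zn / q zn) / (\<Sum>i\<in>{1..K}. p x ((y(n := zn)) i) / q ((y(n := zn)) i))) ^ 2
                   *\<^sub>R grad (\<lambda>u. ln (p x u / q u)) zn)" for zn
    unfolding g_def[abs_def]
    by (rule grad_first_variation_at_q[OF p_pos q_pos p_diff q_diff _ n])
       (use K reg_z1[of zn] reg_z2[of zn] in \<open>simp_all add: log_weight_mean_def normalized_weight_def\<close>)
  ultimately show ?thesis by blast
qed

end
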